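(* Let $\hat n_1=(0,0,1)$, $\hat n_2=(\tfrac{\sqrt3}{2},0,-\tfrac12)$, $\hat n_3=(-\tfrac{\sqrt3}{2},0,-\tfrac12)$, $\eta=\sqrt3-1$, and $\mathcal{M}_k$ the qubit POVM $\{E^k_\pm=\tfrac12\mathbf{1}\pm\tfrac\eta2\vec\sigma\cdot\hat n_k\}$. For each pair $j\neq k$ let $\mathcal{M}_{jk}$ be the POVM $\{F_{X_jX_k}=w_{X_jX_k}\Pi_{X_jX_k}\}$ with $w_{++}=w_{--}=\frac1{\sqrt3+1}$, $w_{+-}=w_{-+}=\frac{\sqrt3}{\sqrt3+1}$, and $\Pi_{X_jX_k}=\tfrac12\mathbf{1}+\tfrac12\vec\sigma\cdot\hat m_{X_jX_k}$ with $\hat m_{X_jX_k}$ the unit vector along $X_j\hat n_j+X_k\hat n_k$ (a joint measurement of $\mathcal{M}_j,\mathcal{M}_k$). Then for every quantum state the probability of anti-correlated outcomes in $\mathcal{M}_{jk}$ equals $\frac{\sqrt3}{\sqrt3+1}$; in particular $R_3=\tfrac13\sum_{j<k}p(X_j\neq X_k|\mathcal{M}_{jk})=\frac{\sqrt3}{\sqrt3+1}\approx0.63397$, independent of the state.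
   Context: $\vec\sigma=(\sigma_x,\sigma_y,\sigma_z)$ are the Pauli matrices; a POVM with effects $E_X$ yields outcome $X$ on state $\rho$ with probability $\mathrm{Tr}(\rho E_X)$. *)

theory Defs
  imports "HOL-Analysis.Analysis"
begin

text \<open>Qubit operators are complex 2x2 matrices; row/column index 1 is the first basis vector.\<close>

definition sigma_x :: "complex^2^2" where
  "sigma_x = (\<chi> i j. if i = j then 0 else 1)"

definition sigma_y :: "complex^2^2" where
  "sigma_y = (\<chi> i j. if i = j then 0 else if i = 1 then - \<i> else \<i>)"

definition sigma_z :: "complex^2^2" where
  "sigma_z = (\<chi> i j. if i \<noteq> j then 0 else if i = 1 then 1 else -1)"

definition sigma_dot :: "real^3 \<Rightarrow> complex^2^2" where
  "sigma_dot v = v$1 *\<^sub>R sigma_x + v$2 *\<^sub>R sigma_y + v$3 *\<^sub>R sigma_z"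

definition density :: "complex^2^2 \<Rightarrow> bool" where
  "density \<rho> \<longleftrightarrow>
     (\<forall>i j. \<rho>$i$j = cnj (\<rho>$j$i)) \<and>
     (\<forall>\<psi>::complex^2. 0 \<le> Re (\<Sum>i\<in>UNIV. \<Sum>j\<in>UNIV. cnj (\<psi>$i) * \<rho>$i$j * \<psi>$j)) \<and>
     trace \<rho> = 1"

definition n_hat :: "nat \<Rightarrow> real^3" where
  "n_hat k = (if k = 1 then vector [0, 0, 1]
              else if k = 2 then vector [sqrt 3 / 2, 0, - 1/2]
              else vector [- sqrt 3 / 2, 0, - 1/2])"

definition eta :: real where "eta = sqrt 3 - 1"

definition E_eff :: "nat \<Rightarrow> real \<Rightarrow> complex^2^2" where
  "E_eff k X = (1/2) *\<^sub>R mat 1 + (X * eta / 2) *\<^sub>R sigma_dot (n_hat k)"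

definition w_jm :: "real \<Rightarrow> real \<Rightarrow> real" where
  "w_jm X Y = (if X = Y then 1 / (sqrt 3 + 1) else sqrt 3 / (sqrt 3 + 1))"

definition m_hat :: "nat \<Rightarrow> nat \<Rightarrow> real \<Rightarrow> real \<Rightarrow> real^3" where
  "m_hat j k X Y = (1 / norm (X *\<^sub>R n_hat j + Y *\<^sub>R n_hat k)) *\<^sub>R (X *\<^sub>R n_hat j + Y *\<^sub>R n_hat k)"

definition Pi_proj :: "nat \<Rightarrow> nat \<Rightarrow> real \<Rightarrow> real \<Rightarrow> complex^2^2" where
  "Pi_proj j k X Y = (1/2) *\<^sub>R mat 1 + (1/2) *\<^sub>R sigma_dot (m_hat j k X Y)"

definition F_eff :: "nat \<Rightarrow> nat \<Rightarrow> real \<Rightarrow> real \<Rightarrow> complex^2^2" where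
  "F_eff j k X Y = w_jm X Y *\<^sub>R Pi_proj j k X Y"

definition prob_jm :: "complex^2^2 \<Rightarrow> nat \<Rightarrow> nat \<Rightarrow> real \<Rightarrow> real \<Rightarrow> complex" where
  "prob_jm \<rho> j k X Y = trace (\<rho> ** F_eff j k X Y)"

definition prob_anti :: "complex^2^2 \<Rightarrow> nat \<Rightarrow> nat \<Rightarrow> complex" where
  "prob_anti \<rho> j k = prob_jm \<rho> j k 1 (-1) + prob_jm \<rho> j k (-1) 1"

end

theory Submission
  imports Defs
begin

text \<open>The two anti-correlated outcomes of \<open>\<M>\<^sub>j\<^sub>k\<close> have equal weights and antipodal Bloch
  vectors \<open>\<plusminus>(n\<^sub>j - n\<^sub>k)/\<bar>n\<^sub>j - n\<^sub>k\<bar>\<close>, so their projectors sum to the identity. Hence the effect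
  for "anti-correlated" is the scalar \<open>\<surd>3/(\<surd>3+1)\<close> times the identity, and its
  probability is that scalar times \<open>Tr \<rho> = 1\<close>, whatever the state.\<close>

lemma sigma_dot_uminus: "sigma_dot (- v) = - sigma_dot v"
  unfolding sigma_dot_def by (simp add: algebra_simps)

lemma m_hat_uminus_outcomes: "m_hat j k (- X) (- Y) = - m_hat j k X Y"
proof -
  have "(- X) *\<^sub>R n_hat j + (- Y) *\<^sub>R n_hat k = - (X *\<^sub>R n_hat j + Y *\<^sub>R n_hat k)"
    by (simp add: algebra_simps)
  then show ?thesis
    unfolding m_hat_def by (simp only: norm_minus_cancel scaleR_minus_right)
qed

lemma Pi_proj_add_opposite: "Pi_proj j k X Y + Pi_proj j k (- X) (- Y) = mat 1"
  unfolding Pi_proj_def m_hat_uminus_outcomes sigma_dot_uminus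
  by (simp add: algebra_simps flip: scaleR_add_left)

lemma F_eff_anti_correlated: "F_eff j k 1 (-1) + F_eff j k (-1) 1 = (sqrt 3 / (sqrt 3 + 1)) *\<^sub>R mat 1"
  using Pi_proj_add_opposite[of j k 1 "-1"]
  unfolding F_eff_def w_jm_def by (simp flip: scaleR_add_right)

lemma trace_matrix_mult_scaleR_mat:
  fixes A :: "'a::real_algebra_1^'n^'n"
  shows "trace (A ** (c *\<^sub>R mat 1)) = of_real c * trace A"
proof -
  have "A ** (c *\<^sub>R mat 1) = c *\<^sub>R A"
    by (simp add: vec_eq_iff matrix_matrix_mult_def mat_def if_distrib cong: if_cong)
  then show ?thesis
    unfolding trace_def by (simp add: scaleR_sum_right flip: scaleR_conv_of_real)
qed

lemma prob_anti_eq: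
  assumes "trace \<rho> = 1"
  shows "prob_anti \<rho> j k = complex_of_real (sqrt 3 / (sqrt 3 + 1))"
proof -
  have "prob_anti \<rho> j k = trace (\<rho> ** (F_eff j k 1 (-1) + F_eff j k (-1) 1))"
    unfolding prob_anti_def prob_jm_def by (simp add: matrix_add_ldistrib trace_add)
  also have "\<dots> = complex_of_real (sqrt 3 / (sqrt 3 + 1)) * trace \<rho>"
    unfolding F_eff_anti_correlated by (rule trace_matrix_mult_scaleR_mat)
  finally show ?thesis
    using assms by simp
qed

theorem proposition4:
  fixes \<rho> :: "complex^2^2"
  assumes "density \<rho>"
  shows "(\<forall>j\<in>{1,2,3}. \<forall>k\<in>{1,2,3}. j \<noteq> k \<longrightarrow>
            prob_anti \<rho> j k = complex_of_real (sqrt 3 / (sqrt 3 + 1)))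
       \<and> (1/3) * (prob_anti \<rho> 1 2 + prob_anti \<rho> 1 3 + prob_anti \<rho> 2 3)
            = complex_of_real (sqrt 3 / (sqrt 3 + 1))"
proof -
  have "trace \<rho> = 1"
    using assms unfolding density_def by blast
  then show ?thesis
    using prob_anti_eq by simp
qed

end
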